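(* Consider a downlink cloud radio access network with $L$ single-antenna base stations indexed by $l\in\mathcal{L}=\{1,\dots,L\}$ and $K$ single-antenna users indexed by $k\in\mathcal{K}=\{1,\dots,K\}$. Let $\mathbf{h}_k\in\mathbb{C}^{L}$ be the channel vector to user $k$, let $\sigma^2>0$ be the noise variance, let $\Gamma_m\ge 1$ and $\Gamma_q\ge 1$ be constants, let $\alpha_k\ge 0$ be user weights, let $P_l>0$ and $C_l>0$ be the power budget and backhaul capacity of base station $l$, and let $\hat R_k\ge 0$, $k\in\mathcal{K}$, be fixed constants. The optimization variables are complex numbers $w^d_{l,k}, w^c_{l,k}, w_{l,k}$ and quantization noise levels $q_l>0$. Write $\mathbf{w}_k=[w_{1,k},\dots,w_{L,k}]^T$ and $\mathbf{Q}=\mathrm{diag}(q_1,\dots,q_L)$, and define $$R_k=\log\left(1+\frac{|\mathbf{h}_k^H\mathbf{w}_k|^2}{\Gamma_m\left(\sum_{j\neq k}|\mathbf{h}_k^H\mathbf{w}_j|^2+\sigma^2+\mathbf{h}_k^H\mathbf{Q}\mathbf{h}_k\right)}\right).$$ Consider the problem $$\max_{\{w^d_{l,k}\},\{w^c_{l,k}\},\{w_{l,k}\},\{q_l\}}\ \sum_{k=1}^K\alpha_k R_k$$ subject to, for all $l\in\mathcal{L}$ and $k\in\mathcal{K}$, $$\sum_{k=1}^K|w_{l,k}|^2+q_l\le P_l,\qquad \sum_{k=1}^K \mathbb{1}\{|w^d_{l,k}|^2\}\,\hat R_k+\log\left(1+\frac{\Gamma_q\sum_{k=1}^K|w^c_{l,k}|^2}{q_l}\right)\le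 C_l,\qquad w^d_{l,k}+w^c_{l,k}=w_{l,k},$$ where $\mathbb{1}\{x\}$ equals $1$ if $x\neq 0$ and $0$ otherwise. Then the global optimal point $(\{w_{l,k}\},\{w^c_{l,k}\},\{w^d_{l,k}\})$ of this problem has, for every $l\in\mathcal{L}$ and $k\in\mathcal{K}$, $w^c_{l,k}=0$ or $w^d_{l,k}=0$ (or both).
   Context: This is the hybrid data-sharing/compression strategy: $w^d_{l,k}$ is the beamforming coefficient applied at base station $l$ to user $k$'s message delivered directly over the backhaul (data-sharing), $w^c_{l,k}$ is the coefficient used at the central processor to form the signal that is compressed with quantization noise of variance $q_l$ and sent to base station $l$, and $w_{l,k}$ is the combined beamformer. In the paper's original formulation the term $\hat R_k$ in the backhaul constraint is the rate $R_k$ itself; the proposition concerns the version where this rate in the backhaul constraint is held fixed. *)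

theory Defs
  imports Complex_Main
begin

text \<open>Indices: base stations l in {1..L}, users k in {1..K}.
  Beamformers are functions w l k; the channel is h k l (entry l of vector h_k).\<close>

definition indic :: "real \<Rightarrow> real" where
  "indic x = (if x \<noteq> 0 then 1 else 0)"

definition hw :: "nat \<Rightarrow> (nat \<Rightarrow> nat \<Rightarrow> complex) \<Rightarrow> (nat \<Rightarrow> nat \<Rightarrow> complex) \<Rightarrow> nat \<Rightarrow> nat \<Rightarrow> complex" where
  "hw L h w k j = (\<Sum>l=1..L. cnj (h k l) * w l j)"

definition rate ::
  "nat \<Rightarrow> nat \<Rightarrow> (nat \<Rightarrow> nat \<Rightarrow> complex) \<Rightarrow> real \<Rightarrow> real
   \<Rightarrow> (nat \<Rightarrow> nat \<Rightarrow> complex) \<Rightarrow> (nat \<Rightarrow> real) \<Rightarrow> nat \<Rightarrow> real" where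
  "rate L K h \<sigma>2 \<Gamma>m w q k =
     ln (1 + (cmod (hw L h w k k))\<^sup>2 /
        (\<Gamma>m * ((\<Sum>j\<in>{1..K} - {k}. (cmod (hw L h w k j))\<^sup>2) + \<sigma>2
                 + (\<Sum>l=1..L. q l * (cmod (h k l))\<^sup>2))))"

definition objective ::
  "nat \<Rightarrow> nat \<Rightarrow> (nat \<Rightarrow> nat \<Rightarrow> complex) \<Rightarrow> real \<Rightarrow> real \<Rightarrow> (nat \<Rightarrow> real)
   \<Rightarrow> (nat \<Rightarrow> nat \<Rightarrow> complex) \<Rightarrow> (nat \<Rightarrow> real) \<Rightarrow> real" where
  "objective L K h \<sigma>2 \<Gamma>m \<alpha> w q = (\<Sum>k=1..K. \<alpha> k * rate L K h \<sigma>2 \<Gamma>m w q k)"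

definition feasible ::
  "nat \<Rightarrow> nat \<Rightarrow> real \<Rightarrow> (nat \<Rightarrow> real) \<Rightarrow> (nat \<Rightarrow> real) \<Rightarrow> (nat \<Rightarrow> real)
   \<Rightarrow> (nat \<Rightarrow> nat \<Rightarrow> complex) \<Rightarrow> (nat \<Rightarrow> nat \<Rightarrow> complex) \<Rightarrow> (nat \<Rightarrow> nat \<Rightarrow> complex)
   \<Rightarrow> (nat \<Rightarrow> real) \<Rightarrow> bool" where
  "feasible L K \<Gamma>q P C Rhat wd wc w q \<longleftrightarrow>
     (\<forall>l\<in>{1..L}.
        q l > 0
      \<and> (\<Sum>k=1..K. (cmod (w l k))\<^sup>2) + q l \<le> P l
      \<and> (\<Sum>k=1..K. indic ((cmod (wd l k))\<^sup>2) * Rhat k)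
          + ln (1 + \<Gamma>q * (\<Sum>k=1..K. (cmod (wc l k))\<^sup>2) / q l) \<le> C l
      \<and> (\<forall>k\<in>{1..K}. wd l k + wc l k = w l k))"

definition optimal ::
  "nat \<Rightarrow> nat \<Rightarrow> (nat \<Rightarrow> nat \<Rightarrow> complex) \<Rightarrow> real \<Rightarrow> real \<Rightarrow> real \<Rightarrow> (nat \<Rightarrow> real)
   \<Rightarrow> (nat \<Rightarrow> real) \<Rightarrow> (nat \<Rightarrow> real) \<Rightarrow> (nat \<Rightarrow> real)
   \<Rightarrow> (nat \<Rightarrow> nat \<Rightarrow> complex) \<Rightarrow> (nat \<Rightarrow> nat \<Rightarrow> complex) \<Rightarrow> (nat \<Rightarrow> nat \<Rightarrow> complex)
   \<Rightarrow> (nat \<Rightarrow> real) \<Rightarrow> bool" where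
  "optimal L K h \<sigma>2 \<Gamma>m \<Gamma>q \<alpha> P C Rhat wd wc w q \<longleftrightarrow>
     feasible L K \<Gamma>q P C Rhat wd wc w q \<and>
     (\<forall>wd' wc' w' q'. feasible L K \<Gamma>q P C Rhat wd' wc' w' q' \<longrightarrow>
        objective L K h \<sigma>2 \<Gamma>m \<alpha> w' q' \<le> objective L K h \<sigma>2 \<Gamma>m \<alpha> w q)"

end

theory Submission
  imports Defs
begin

text \<open>The objective depends only on the combined beamformers \<open>w\<close> and on \<open>q\<close>, so any
  re-splitting \<open>w = wd + wc\<close> that stays feasible is again optimal. Route every pair \<open>(l, k)\<close>
  that already uses data-sharing entirely through data-sharing, and leave the others unchanged:
  the data-sharing load does not grow, since the support of \<open>wd\<close> is kept, and the compression
  load does not grow, since the compressed signal only loses entries. The power constraint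
  involves \<open>w\<close> and \<open>q\<close> alone.\<close>

lemma data_sharing_load_mono:
  fixes u v :: "nat \<Rightarrow> complex" and Rhat :: "nat \<Rightarrow> real"
  assumes "\<forall>k\<in>A. Rhat k \<ge> 0" and "\<forall>k\<in>A. u k \<noteq> 0 \<longrightarrow> v k \<noteq> 0"
  shows "(\<Sum>k\<in>A. indic ((cmod (u k))\<^sup>2) * Rhat k) \<le> (\<Sum>k\<in>A. indic ((cmod (v k))\<^sup>2) * Rhat k)"
  by (rule sum_mono) (use assms in \<open>auto simp: indic_def\<close>)

lemma compression_load_mono:
  fixes u v :: "nat \<Rightarrow> complex" and \<Gamma> q :: real
  assumes "\<Gamma> \<ge> 0" and "q > 0" and "\<forall>k\<in>A. cmod (u k) \<le> cmod (v k)"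
  shows "ln (1 + \<Gamma> * (\<Sum>k\<in>A. (cmod (u k))\<^sup>2) / q) \<le> ln (1 + \<Gamma> * (\<Sum>k\<in>A. (cmod (v k))\<^sup>2) / q)"
proof -
  have "(\<Sum>k\<in>A. (cmod (u k))\<^sup>2) \<le> (\<Sum>k\<in>A. (cmod (v k))\<^sup>2)"
    using assms(3) by (intro sum_mono power_mono) auto
  then have "\<Gamma> * (\<Sum>k\<in>A. (cmod (u k))\<^sup>2) / q \<le> \<Gamma> * (\<Sum>k\<in>A. (cmod (v k))\<^sup>2) / q"
    using assms(1,2) by (intro divide_right_mono mult_left_mono) auto
  moreover have "0 \<le> \<Gamma> * (\<Sum>k\<in>A. (cmod (u k))\<^sup>2) / q"
    using assms(1,2) by (simp add: sum_nonneg)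
  ultimately show ?thesis by simp
qed

lemma feasible_resplit:
  assumes "feasible L K \<Gamma>q P C Rhat wd wc w q"
    and "\<Gamma>q \<ge> 0" and "\<forall>k\<in>{1..K}. Rhat k \<ge> 0"
    and "\<forall>l\<in>{1..L}. \<forall>k\<in>{1..K}. wd' l k + wc' l k = w l k"
    and "\<forall>l\<in>{1..L}. \<forall>k\<in>{1..K}. wd' l k \<noteq> 0 \<longrightarrow> wd l k \<noteq> 0"
    and "\<forall>l\<in>{1..L}. \<forall>k\<in>{1..K}. cmod (wc' l k) \<le> cmod (wc l k)"
  shows "feasible L K \<Gamma>q P C Rhat wd' wc' w q"
  unfolding feasible_def
proof (intro ballI conjI)
  fix l assume l: "l \<in> {1..L}"
  have q: "q l > 0"
    and backhaul: "(\<Sum>k=1..K. indic ((cmod (wd l k))\<^sup>2) * Rhat k)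
        + ln (1 + \<Gamma>q * (\<Sum>k=1..K. (cmod (wc l k))\<^sup>2) / q l) \<le> C l"
    using assms(1) l unfolding feasible_def by blast+
  show "q l > 0" by (fact q)
  show "(\<Sum>k=1..K. (cmod (w l k))\<^sup>2) + q l \<le> P l"
    using assms(1) l unfolding feasible_def by blast
  show "wd' l k + wc' l k = w l k" if "k \<in> {1..K}" for k
    using assms(4) l that by blast
  have "(\<Sum>k=1..K. indic ((cmod (wd' l k))\<^sup>2) * Rhat k)
      \<le> (\<Sum>k=1..K. indic ((cmod (wd l k))\<^sup>2) * Rhat k)"
    using assms(3,5) l by (intro data_sharing_load_mono) auto
  moreover have "ln (1 + \<Gamma>q * (\<Sum>k=1..K. (cmod (wc' l k))\<^sup>2) / q l)
      \<le> ln (1 + \<Gamma>q * (\<Sum>k=1..K. (cmod (wc l k))\<^sup>2) / q l)"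
    using assms(2,6) q l by (intro compression_load_mono) auto
  ultimately show "(\<Sum>k=1..K. indic ((cmod (wd' l k))\<^sup>2) * Rhat k)
      + ln (1 + \<Gamma>q * (\<Sum>k=1..K. (cmod (wc' l k))\<^sup>2) / q l) \<le> C l"
    using backhaul by linarith
qed

lemma optimal_resplit:
  assumes "optimal L K h \<sigma>2 \<Gamma>m \<Gamma>q \<alpha> P C Rhat wd wc w q"
    and "feasible L K \<Gamma>q P C Rhat wd' wc' w q"
  shows "optimal L K h \<sigma>2 \<Gamma>m \<Gamma>q \<alpha> P C Rhat wd' wc' w q"
  using assms unfolding optimal_def by blast

theorem proposition1:
  fixes L K :: nat and h :: "nat \<Rightarrow> nat \<Rightarrow> complex"
    and \<sigma>2 \<Gamma>m \<Gamma>q :: real and \<alpha> P C Rhat :: "nat \<Rightarrow> real"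
    and wd wc w :: "nat \<Rightarrow> nat \<Rightarrow> complex" and q :: "nat \<Rightarrow> real"
  assumes "\<sigma>2 > 0" and "\<Gamma>m \<ge> 1" and "\<Gamma>q \<ge> 1"
    and "\<forall>k\<in>{1..K}. \<alpha> k \<ge> 0"
    and "\<forall>l\<in>{1..L}. P l > 0" and "\<forall>l\<in>{1..L}. C l > 0"
    and "\<forall>k\<in>{1..K}. Rhat k \<ge> 0"
    and "optimal L K h \<sigma>2 \<Gamma>m \<Gamma>q \<alpha> P C Rhat wd wc w q"
  shows "\<exists>wd' wc' w' q'. optimal L K h \<sigma>2 \<Gamma>m \<Gamma>q \<alpha> P C Rhat wd' wc' w' q'
           \<and> (\<forall>l\<in>{1..L}. \<forall>k\<in>{1..K}. wc' l k = 0 \<or> wd' l k = 0)"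
proof -
  define wd' where "wd' = (\<lambda>l k. if wd l k \<noteq> 0 then w l k else 0)"
  define wc' where "wc' = (\<lambda>l k. if wd l k \<noteq> 0 then 0 else wc l k)"
  have feasible_split: "feasible L K \<Gamma>q P C Rhat wd wc w q"
    using assms(8) unfolding optimal_def by blast
  then have combined: "\<forall>l\<in>{1..L}. \<forall>k\<in>{1..K}. wd l k + wc l k = w l k"
    unfolding feasible_def by blast
  have resplit: "\<forall>l\<in>{1..L}. \<forall>k\<in>{1..K}. wd' l k + wc' l k = w l k"
  proof (intro ballI)
    fix l k assume "l \<in> {1..L}" "k \<in> {1..K}"
    with combined have "wd l k + wc l k = w l k" by blast
    then show "wd' l k + wc' l k = w l k" by (auto simp: wd'_def wc'_def)
  qed
  have "\<Gamma>q \<ge> 0" using assms(3) by simp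
  from feasible_split this assms(7) resplit have "feasible L K \<Gamma>q P C Rhat wd' wc' w q"
    by (rule feasible_resplit) (simp_all add: wd'_def wc'_def)
  with assms(8) have "optimal L K h \<sigma>2 \<Gamma>m \<Gamma>q \<alpha> P C Rhat wd' wc' w q"
    by (rule optimal_resplit)
  moreover have "\<forall>l\<in>{1..L}. \<forall>k\<in>{1..K}. wc' l k = 0 \<or> wd' l k = 0"
    by (simp add: wd'_def wc'_def)
  ultimately show ?thesis by blast
qed

end
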